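(* For every $n\ge4$, the matroid $L_n$ is not liftable.
   Context: For $n\ge4$, $L_n$ is the rank-three paving matroid arising from $n$ lines in general position in $\mathbb{P}^2$ and their $\binom n2$ pairwise intersection points: equivalently, its ground set is the set of 2-element subsets $\{i,j\}\subseteq[n]$, and its lines (dependent hyperplanes) are $\ell_i=\{\{i,j\}:j\ne i\}$ for $i\in[n]$; its circuits are the 3-subsets of some $\ell_i$ and the 4-subsets containing no 3-subset of any $\ell_i$. For a matroid $N$ on a finite set $E$, the circuit variety $V_{\mathcal{C}(N)}$ is the set of tuples $(\gamma_e)_{e\in E}$ in $\mathbb{C}^3$ with $(\gamma_e)_{e\in S}$ linearly dependent for every dependent set $S$. $N$ is liftable if for every tuple $(\gamma_e)_{e\in E}$ in $\mathbb{C}^3$ spanning a plane $H$ and every $q\notin H$ there exist scalars $z_e$ such that $(\gamma_e+z_eq)\in V_{\mathcal{C}(N)}$ and the vectors $\gamma_e+z_eq$ do not all lie in a common plane. *)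

theory Defs
  imports "HOL-Analysis.Analysis"
begin

type_synonym cvec3 = "complex ^ 3"

definition fam_dependent :: "('e \<Rightarrow> cvec3) \<Rightarrow> 'e set \<Rightarrow> bool" where
  "fam_dependent \<gamma> S \<longleftrightarrow>
     (\<exists>c :: 'e \<Rightarrow> complex. (\<exists>e\<in>S. c e \<noteq> 0) \<and> (\<Sum>e\<in>S. c e *s \<gamma> e) = 0)"

definition circuit_variety :: "'e set \<Rightarrow> ('e set \<Rightarrow> bool) \<Rightarrow> ('e \<Rightarrow> cvec3) set" where
  "circuit_variety E dep = {\<gamma>. \<forall>S. S \<subseteq> E \<and> dep S \<longrightarrow> fam_dependent \<gamma> S}"

definition is_plane :: "cvec3 set \<Rightarrow> bool" where
  "is_plane H \<longleftrightarrow> vec.subspace H \<and> vec.dim H = 2"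

definition liftable :: "'e set \<Rightarrow> ('e set \<Rightarrow> bool) \<Rightarrow> bool" where
  "liftable E dep \<longleftrightarrow>
    (\<forall>\<gamma> :: 'e \<Rightarrow> cvec3. \<forall>H q.
       is_plane H \<and> vec.span (\<gamma> ` E) = H \<and> q \<notin> H \<longrightarrow>
       (\<exists>z :: 'e \<Rightarrow> complex.
          (\<lambda>e. \<gamma> e + z e *s q) \<in> circuit_variety E dep \<and>
          \<not> (\<exists>P. is_plane P \<and> (\<forall>e\<in>E. \<gamma> e + z e *s q \<in> P))))"

definition Ln_ground :: "nat \<Rightarrow> nat set set" where
  "Ln_ground n = {{i, j} | i j. i \<in> {1..n} \<and> j \<in> {1..n} \<and> i \<noteq> j}"

definition Ln_line :: "nat \<Rightarrow> nat \<Rightarrow> nat set set" where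
  "Ln_line n i = {e \<in> Ln_ground n. i \<in> e}"

definition Ln_circuit :: "nat \<Rightarrow> nat set set \<Rightarrow> bool" where
  "Ln_circuit n C \<longleftrightarrow> C \<subseteq> Ln_ground n \<and>
     ((card C = 3 \<and> (\<exists>i\<in>{1..n}. C \<subseteq> Ln_line n i)) \<or>
      (card C = 4 \<and> \<not> (\<exists>T\<subseteq>C. card T = 3 \<and> (\<exists>i\<in>{1..n}. T \<subseteq> Ln_line n i))))"

definition Ln_dependent :: "nat \<Rightarrow> nat set set \<Rightarrow> bool" where
  "Ln_dependent n S \<longleftrightarrow> S \<subseteq> Ln_ground n \<and> (\<exists>C\<subseteq>S. Ln_circuit n C)"

end

theory Submission
  imports Defs
begin

text \<open>
  Place the points of \<open>L\<^sub>n\<close> in the plane \<open>x\<^sub>3 = 0\<close>: \<open>{1,3}\<close>, \<open>{2,4}\<close> and all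
  \<open>{1,j}\<close> with \<open>j \<ge> 5\<close> at \<open>e\<^sub>1\<close>, \<open>{1,4}\<close> at \<open>e\<^sub>1 + e\<^sub>2\<close>, and every other point at
  \<open>e\<^sub>2\<close>. Each line \<open>\<ell>\<^sub>i\<close> then contains a point at \<open>e\<^sub>1\<close> and one at \<open>e\<^sub>2\<close>, so the
  3-circuits of \<open>\<ell>\<^sub>i\<close> force any lift in the circuit variety to put all of \<open>\<ell>\<^sub>i\<close> into a
  plane \<open>x\<^sub>3 = a\<^sub>i x\<^sub>1 + b\<^sub>i x\<^sub>2\<close>. Lines sharing a point at \<open>e\<^sub>1\<close> have equal \<open>a\<^sub>i\<close>,
  lines sharing a point at \<open>e\<^sub>2\<close> equal \<open>b\<^sub>i\<close>, and the point \<open>{1,4}\<close> at \<open>e\<^sub>1 + e\<^sub>2\<close>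
  gives \<open>a\<^sub>4 + b\<^sub>4 = a\<^sub>1 + b\<^sub>1\<close>; together these make all the planes coincide, so
  no lift of this configuration spans \<open>\<complex>\<^sup>3\<close>.
\<close>

definition graph_plane :: "complex \<Rightarrow> complex \<Rightarrow> cvec3 set" where
  "graph_plane a b = {x. x $ 3 = a * x $ 1 + b * x $ 2}"

lemma cvec3_eq_iff: "(x::cvec3) = y \<longleftrightarrow> x $ 1 = y $ 1 \<and> x $ 2 = y $ 2 \<and> x $ 3 = y $ 3"
  by (auto simp: vec_eq_iff forall_3)

lemma subspace_graph_plane: "vec.subspace (graph_plane a b)"
  unfolding vec.subspace_def graph_plane_def by (auto simp: algebra_simps)

lemma graph_plane_eq_span:
  "graph_plane a b = vec.span {vector [1, 0, a], vector [0, 1, b]}" (is "_ = vec.span {?u, ?v}")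
proof
  show "graph_plane a b \<subseteq> vec.span {?u, ?v}"
  proof
    fix x assume "x \<in> graph_plane a b"
    then have "x = x $ 1 *s ?u + x $ 2 *s ?v"
      by (simp add: graph_plane_def cvec3_eq_iff mult.commute)
    then show "x \<in> vec.span {?u, ?v}"
      by (metis vec.span_add vec.span_base vec.span_scale insertI1 insertI2)
  qed
  show "vec.span {?u, ?v} \<subseteq> graph_plane a b"
    by (intro vec.span_minimal subspace_graph_plane) (simp add: graph_plane_def)
qed

lemma is_plane_span_pair:
  assumes "vec.independent {u, v}" "u \<noteq> v"
  shows "is_plane (vec.span {u, v :: cvec3})"
  using assms by (simp add: is_plane_def vec.dim_span vec.dim_eq_card_independent)

lemma is_plane_graph_plane: "is_plane (graph_plane a b)"
proof -
  let ?u = "vector [1, 0, a] :: cvec3" and ?v = "vector [0, 1, b] :: cvec3"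
  have "?v \<notin> vec.span {?u}"
  proof
    assume "?v \<in> vec.span {?u}"
    then obtain k where "?v = k *s ?u" by (auto simp: vec.span_singleton)
    then show False by (simp add: cvec3_eq_iff)
  qed
  moreover have "?u \<noteq> 0" by (simp add: cvec3_eq_iff)
  ultimately have "vec.independent {?v, ?u}"
    by (simp add: vec.independent_insert)
  moreover have "?u \<noteq> ?v" by (simp add: cvec3_eq_iff)
  ultimately show ?thesis
    unfolding graph_plane_eq_span by (metis is_plane_span_pair insert_commute)
qed

lemma fam_dependent_triple_third_coord:
  fixes w :: "'e \<Rightarrow> cvec3"
  assumes "fam_dependent w {e, f, g}" "g \<noteq> e" "g \<noteq> f"
    and "w e $ 1 = 1" "w e $ 2 = 0" "w f $ 1 = 0" "w f $ 2 = 1"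
  shows "w g $ 3 = w e $ 3 * w g $ 1 + w f $ 3 * w g $ 2"
proof -
  have "e \<noteq> f" using assms(4,6) by auto
  obtain c where c: "\<exists>x\<in>{e, f, g}. c x \<noteq> 0" and "(\<Sum>x\<in>{e, f, g}. c x *s w x) = 0"
    using assms(1) unfolding fam_dependent_def by blast
  then have sum: "c e *s w e + c f *s w f + c g *s w g = 0"
    using \<open>e \<noteq> f\<close> assms(2,3) by (simp add: add.assoc)
  have c1: "c e + c g * w g $ 1 = 0" using arg_cong[OF sum, of "\<lambda>x. x $ 1"] assms by simp
  have c2: "c f + c g * w g $ 2 = 0" using arg_cong[OF sum, of "\<lambda>x. x $ 2"] assms by simp
  have c3: "c e * w e $ 3 + c f * w f $ 3 + c g * w g $ 3 = 0"
    using arg_cong[OF sum, of "\<lambda>x. x $ 3"] by simp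
  have "c g \<noteq> 0" using c c1 c2 by auto
  moreover have "c g * (w g $ 3 - (w e $ 3 * w g $ 1 + w f $ 3 * w g $ 2)) = 0"
    using c1 c2 c3 by (simp add: algebra_simps eq_neg_iff_add_eq_0[symmetric] add_eq_0_iff2)
  ultimately show ?thesis by simp
qed

lemma doubleton_in_Ln_ground_iff:
  "{i, j} \<in> Ln_ground n \<longleftrightarrow> i \<in> {1..n} \<and> j \<in> {1..n} \<and> i \<noteq> j"
  unfolding Ln_ground_def by (auto simp: doubleton_eq_iff)

lemma Ln_dependent_subset_line:
  assumes "i \<in> {1..n}" "T \<subseteq> Ln_line n i" "card T = 3"
  shows "Ln_dependent n T"
proof -
  have "T \<subseteq> Ln_ground n" using assms(2) by (auto simp: Ln_line_def)
  with assms have "Ln_circuit n T" unfolding Ln_circuit_def by blast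
  with \<open>T \<subseteq> Ln_ground n\<close> show ?thesis unfolding Ln_dependent_def by blast
qed

lemma circuit_variety_Ln_line_graph_plane:
  assumes cv: "v \<in> circuit_variety (Ln_ground n) (Ln_dependent n)" and "i \<in> {1..n}"
    and "e \<in> Ln_line n i" "f \<in> Ln_line n i"
    and "v e $ 1 = 1" "v e $ 2 = 0" "v f $ 1 = 0" "v f $ 2 = 1"
    and "g \<in> Ln_line n i"
  shows "v g \<in> graph_plane (v e $ 3) (v f $ 3)"
proof (cases "g = e \<or> g = f")
  case True
  then show ?thesis using assms(5-8) by (auto simp: graph_plane_def)
next
  case False
  have "e \<noteq> f" using assms(5,7) by auto
  with False have "card {e, f, g} = 3" by (auto simp: card_insert_if)
  then have "Ln_dependent n {e, f, g}"
    using assms(2-4,9) by (intro Ln_dependent_subset_line) auto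
  moreover have "{e, f, g} \<subseteq> Ln_ground n" using assms(3,4,9) by (auto simp: Ln_line_def)
  ultimately have "fam_dependent v {e, f, g}"
    using cv unfolding circuit_variety_def by blast
  with False assms(5-8) show ?thesis
    unfolding graph_plane_def by (auto intro: fam_dependent_triple_third_coord)
qed

definition Ln_config :: "nat set \<Rightarrow> cvec3" where
  "Ln_config e =
     (if e = {1, 3} \<or> e = {2, 4} \<or> (\<exists>j\<ge>5. e = {1, j}) then vector [1, 0, 0]
      else if e = {1, 4} then vector [1, 1, 0]
      else vector [0, 1, 0])"

lemma Ln_config_lift_in_graph_plane:
  assumes "n \<ge> 4" and cv: "v \<in> circuit_variety (Ln_ground n) (Ln_dependent n)"
    and "\<And>e. v e $ 1 = Ln_config e $ 1" "\<And>e. v e $ 2 = Ln_config e $ 2"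
    and "e \<in> Ln_ground n"
  shows "v e \<in> graph_plane (v {1, 3} $ 3) (v {1, 2} $ 3)"
proof -
  define a b where "a = v {1, 3} $ 3" and "b = v {1, 2} $ 3"
  note line = circuit_variety_Ln_line_graph_plane[OF cv]
  have [simp]: "Suc 0 \<le> n" "2 \<le> n" "3 \<le> n" "4 \<le> n" using assms(1) by simp_all
  note [simp] = assms(3,4) Ln_config_def doubleton_eq_iff Ln_line_def doubleton_in_Ln_ground_iff
  have line1: "v g \<in> graph_plane a b" if "g \<in> Ln_line n 1" for g
    using line[of 1 "{1, 3}" "{1, 2}" g] that by (simp add: a_def b_def)
  have "v {2, 3} \<in> graph_plane (v {2, 4} $ 3) b"
    using line[of 2 "{2, 4}" "{1, 2}" "{2, 3}"] by (simp add: b_def)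
  then have b23: "v {2, 3} $ 3 = b" by (simp add: graph_plane_def)
  have line3: "v g \<in> graph_plane a b" if "g \<in> Ln_line n 3" for g
    using line[of 3 "{1, 3}" "{2, 3}" g] that b23 by (simp add: a_def)
  have b34: "v {3, 4} $ 3 = b" using line3[of "{3, 4}"] by (simp add: graph_plane_def)
  have ab14: "v {1, 4} $ 3 = a + b" using line1[of "{1, 4}"] by (simp add: graph_plane_def)
  have "v {1, 4} \<in> graph_plane (v {2, 4} $ 3) b"
    using line[of 4 "{2, 4}" "{3, 4}" "{1, 4}"] b34 by simp
  with ab14 have a24: "v {2, 4} $ 3 = a" by (simp add: graph_plane_def)
  have line2: "v g \<in> graph_plane a b" if "g \<in> Ln_line n 2" for g
    using line[of 2 "{2, 4}" "{1, 2}" g] that a24 by (simp add: b_def)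
  have line4: "v g \<in> graph_plane a b" if "g \<in> Ln_line n 4" for g
    using line[of 4 "{2, 4}" "{3, 4}" g] that a24 b34 by simp
  have linej: "v g \<in> graph_plane a b" if "j \<in> {5..n}" "g \<in> Ln_line n j" for j g
  proof -
    have "v {1, j} $ 3 = a" using line1[of "{1, j}"] that(1) by (simp add: graph_plane_def)
    moreover have "v {3, j} $ 3 = b" using line3[of "{3, j}"] that(1) by (simp add: graph_plane_def)
    ultimately show ?thesis using line[of j "{1, j}" "{3, j}" g] that by simp
  qed
  obtain i j where "e = {i, j}" "i \<in> {1..n}" "j \<in> {1..n}" "i \<noteq> j"
    using assms(5) unfolding Ln_ground_def by blast
  then have "e \<in> Ln_line n i" by simp
  moreover have "i = 1 \<or> i = 2 \<or> i = 3 \<or> i = 4 \<or> i \<in> {5..n}"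
    using \<open>i \<in> {1..n}\<close> by auto
  ultimately show ?thesis
    using line1 line2 line3 line4 linej unfolding a_def b_def by blast
qed

lemma span_Ln_config:
  assumes "n \<ge> 3"
  shows "vec.span (Ln_config ` Ln_ground n) = graph_plane 0 0"
proof
  show "vec.span (Ln_config ` Ln_ground n) \<subseteq> graph_plane 0 0"
    by (intro vec.span_minimal subspace_graph_plane) (auto simp: Ln_config_def graph_plane_def)
  have "{Ln_config {1, 3}, Ln_config {1, 2}} \<subseteq> Ln_config ` Ln_ground n"
    using assms by (simp add: doubleton_in_Ln_ground_iff)
  moreover have "graph_plane 0 0 = vec.span {Ln_config {1, 3}, Ln_config {1, 2}}"
    by (simp add: graph_plane_eq_span Ln_config_def doubleton_eq_iff)
  ultimately show "graph_plane 0 0 \<subseteq> vec.span (Ln_config ` Ln_ground n)"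
    by (simp add: vec.span_mono)
qed

theorem lemma6p3:
  fixes n :: nat
  assumes "n \<ge> 4"
  shows "\<not> liftable (Ln_ground n) (Ln_dependent n)"
proof -
  let ?q = "vector [0, 0, 1] :: cvec3"
  have "vec.span (Ln_config ` Ln_ground n) = graph_plane 0 0"
    using assms by (intro span_Ln_config) simp
  moreover have "?q \<notin> graph_plane 0 0" by (simp add: graph_plane_def)
  moreover have "\<exists>P. is_plane P \<and> (\<forall>e\<in>Ln_ground n. Ln_config e + z e *s ?q \<in> P)"
    if "(\<lambda>e. Ln_config e + z e *s ?q) \<in> circuit_variety (Ln_ground n) (Ln_dependent n)" for z
    using Ln_config_lift_in_graph_plane[OF assms that] is_plane_graph_plane by auto
  ultimately show ?thesis
    unfolding liftable_def using is_plane_graph_plane by blast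
qed

end
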